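(* Let $A,B,C$ be distinct transfer matrices, i.e. distinct matrices of the form $\begin{bmatrix}t&-1\\1&0\end{bmatrix}$ with $t\in\mathbb{R}$. If $AB$ and $AC$ are hyperbolic, then $AB$ and $AC$ have no common eigenvector. Similarly, if $BA$ and $CA$ are hyperbolic, then $BA$ and $CA$ have no common eigenvector.
   Context: A matrix in $SL(2,\mathbb{R})$ is hyperbolic if the absolute value of its trace is greater than $2$. Two matrices share an eigenvector if some nonzero vector is an eigenvector of both (possibly for different eigenvalues). *)

theory Defs
  imports "HOL-Analysis.Analysis"
begin

definition transfer :: "real \<Rightarrow> real^2^2" where
  "transfer t = (\<chi> i j. if i = 1 then (if j = 1 then t else -1)
                          else (if j = 1 then 1 else 0))"

definition is_transfer :: "real^2^2 \<Rightarrow> bool" where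
  "is_transfer A \<longleftrightarrow> (\<exists>t. A = transfer t)"

definition trace2 :: "real^2^2 \<Rightarrow> real" where
  "trace2 M = M $ 1 $ 1 + M $ 2 $ 2"

definition hyperbolic :: "real^2^2 \<Rightarrow> bool" where
  "hyperbolic M \<longleftrightarrow> det M = 1 \<and> \<bar>trace2 M\<bar> > 2"

definition is_eigenvector :: "real^2^2 \<Rightarrow> real^2 \<Rightarrow> bool" where
  "is_eigenvector M v \<longleftrightarrow> v \<noteq> 0 \<and> (\<exists>c. M *v v = c *\<^sub>R v)"

definition share_eigenvector :: "real^2^2 \<Rightarrow> real^2^2 \<Rightarrow> bool" where
  "share_eigenvector M N \<longleftrightarrow> (\<exists>v. is_eigenvector M v \<and> is_eigenvector N v)"

end

theory Submission
  imports Defs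
begin

text \<open>
  If \<open>B A v = \<lambda> v\<close> then \<open>A B (A v) = A (B A v) = \<lambda> A v\<close>, so conjugating by the invertible
  transfer matrix \<open>A\<close> reduces the claim about \<open>B A\<close>, \<open>C A\<close> to the one about \<open>A B\<close>, \<open>A C\<close>;
  hyperbolicity is preserved since \<open>A B\<close> and \<open>B A\<close> have the same determinant and trace.
  For \<open>A = T a\<close>, \<open>B = T b\<close>, \<open>C = T c\<close> the difference \<open>A B - A C = (b - c) A e\<^sub>1 e\<^sub>1\<^sup>T\<close>
  has rank one, so a common eigenvector lies either on its kernel \<open>\<real> e\<^sub>2\<close> or on its image
  \<open>\<real> (a, 1)\<close>. Neither line is invariant under \<open>A B\<close> unless \<open>a = 0\<close>, and then
  \<open>trace (A B) = a b - 2 = -2\<close>, so \<open>A B\<close> is not hyperbolic.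
\<close>

lemma trace2_eq_trace: "trace2 M = trace M"
  by (simp add: trace2_def trace_def sum_2)

lemma hyperbolic_mult_commute: "hyperbolic (A ** B) \<longleftrightarrow> hyperbolic (B ** A)"
  using trace_mul_sym[of A B] by (simp add: hyperbolic_def det_mul trace2_eq_trace mult.commute)

lemma is_eigenvector_mult_commute:
  assumes "invertible A" and "is_eigenvector (B ** A) v"
  shows "is_eigenvector (A ** B) (A *v v)"
proof -
  from assms(2) obtain l where "v \<noteq> 0" and eigen: "(B ** A) *v v = l *\<^sub>R v"
    unfolding is_eigenvector_def by blast
  then have "A *v v \<noteq> 0"
    using inj_matrix_vector_mult[OF assms(1)] by (metis injD matrix_vector_mult_0_right)
  moreover have "(A ** B) *v (A *v v) = l *\<^sub>R (A *v v)"
    by (metis eigen matrix_vector_mul_assoc matrix_vector_mult_scaleR)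
  ultimately show ?thesis
    unfolding is_eigenvector_def by blast
qed

lemma share_eigenvector_mult_commute:
  "invertible A \<Longrightarrow> share_eigenvector (B ** A) (C ** A) \<Longrightarrow> share_eigenvector (A ** B) (A ** C)"
  unfolding share_eigenvector_def using is_eigenvector_mult_commute by blast

lemma det_transfer: "det (transfer t) = 1"
  by (simp add: det_2 transfer_def)

lemma invertible_transfer: "invertible (transfer t)"
  by (simp add: invertible_det_nz det_transfer)

lemma transfer_mult_transfer:
  "transfer a ** transfer b =
     (\<chi> i j. if i = 1 then (if j = 1 then a * b - 1 else - a) else (if j = 1 then b else - 1))"
  by (simp add: transfer_def matrix_matrix_mult_def vec_eq_iff forall_2 sum_2)

lemma trace_transfer_mult: "trace2 (transfer a ** transfer b) = a * b - 2"
  by (simp add: trace2_def transfer_mult_transfer)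

lemma hyperbolic_transfer_mult_nonzero: "hyperbolic (transfer a ** transfer b) \<Longrightarrow> a \<noteq> 0"
  by (auto simp: hyperbolic_def trace_transfer_mult)

lemma transfer_mult_eigen_iff:
  "(transfer a ** transfer b) *v v = l *\<^sub>R v \<longleftrightarrow>
     (a * b - 1) * v$1 - a * v$2 = l * v$1 \<and> b * v$1 - v$2 = l * v$2"
  by (simp add: transfer_mult_transfer matrix_vector_mult_def vec_eq_iff forall_2 sum_2)

lemma share_eigenvector_transfer_mult:
  assumes "b \<noteq> c" and "share_eigenvector (transfer a ** transfer b) (transfer a ** transfer c)"
  shows "a = 0"
proof -
  from assms(2) obtain v l m where "v \<noteq> 0"
    and eigen_v: "(transfer a ** transfer b) *v v = l *\<^sub>R v" "(transfer a ** transfer c) *v v = m *\<^sub>R v"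
    unfolding share_eigenvector_def is_eigenvector_def by blast
  define x y where "x = v$1" and "y = v$2"
  have nonzero: "x \<noteq> 0 \<or> y \<noteq> 0"
    using \<open>v \<noteq> 0\<close> by (auto simp: x_def y_def vec_eq_iff forall_2)
  have eigen_b: "(a * b - 1) * x - a * y = l * x" "b * x - y = l * y"
    and eigen_c: "(a * c - 1) * x - a * y = m * x" "c * x - y = m * y"
    using eigen_v by (simp_all add: x_def y_def transfer_mult_eigen_iff)
  have diff: "(l - m) * x = (b - c) * x * a" "(l - m) * y = (b - c) * x"
    using eigen_b eigen_c by (simp_all add: algebra_simps)
  show "a = 0"
  proof (cases "x = 0")
    case True
    then show ?thesis using nonzero eigen_b(1) by simp
  next
    case False
    with diff(1) have "l - m = (b - c) * a" by simp
    with diff(2) assms(1) have x_eq: "x = a * y" by simp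
    with False have "y \<noteq> 0" by auto
    moreover have "(a * b - 1 - l) * y = 0"
      using eigen_b(2) x_eq by (simp add: algebra_simps)
    ultimately have "l = a * b - 1" by simp
    with eigen_b(1) x_eq have "x = 0" by (simp add: algebra_simps)
    with False show ?thesis by contradiction
  qed
qed

theorem lemma5:
  fixes A B C :: "real^2^2"
  assumes "is_transfer A" "is_transfer B" "is_transfer C"
    and "A \<noteq> B" "A \<noteq> C" "B \<noteq> C"
  shows "(hyperbolic (A ** B) \<and> hyperbolic (A ** C) \<longrightarrow> \<not> share_eigenvector (A ** B) (A ** C))
       \<and> (hyperbolic (B ** A) \<and> hyperbolic (C ** A) \<longrightarrow> \<not> share_eigenvector (B ** A) (C ** A))"
proof -
  obtain a b c where abc: "A = transfer a" "B = transfer b" "C = transfer c"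
    using assms(1-3) unfolding is_transfer_def by blast
  \<comment> \<open>only \<open>B \<noteq> C\<close> and the hyperbolicity of \<open>A B\<close> resp. \<open>B A\<close> are needed\<close>
  with assms(6) have "b \<noteq> c" by auto
  have no_common: "\<not> share_eigenvector (A ** B) (A ** C)" if "hyperbolic (A ** B)"
    using share_eigenvector_transfer_mult[OF \<open>b \<noteq> c\<close>]
      hyperbolic_transfer_mult_nonzero that unfolding abc by blast
  have "\<not> share_eigenvector (B ** A) (C ** A)" if "hyperbolic (B ** A)"
    using no_common[unfolded hyperbolic_mult_commute[of A B]] that
      share_eigenvector_mult_commute[of A B C] invertible_transfer abc(1) by blast
  with no_common show ?thesis by blast
qed

end
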